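(* Let $(X,d)$ be a metric space, let $P\subseteq X$ be a finite set of terminals, and let $P_1,\dots,P_k$ be a partition of $P$ into nonempty sets. Suppose $\mathcal{A}$ is an $\alpha$-factor approximation algorithm for the minimum Steiner tree problem in $(X,d)$ (for every finite $S\subseteq X$ it outputs a Steiner tree for $S$ of length at most $\alpha$ times the minimum length of a Steiner tree for $S$). Consider the following "simple bottom-up" algorithm: for each $i=1,\dots,k$ compute $T_i:=\mathcal{A}(P_i)$, choose an arbitrary connection point $q_i\in P_i$, compute $T_{top}:=\mathcal{A}(\{q_1,\dots,q_k\})$, and return $T=(T_{top},T_1,\dots,T_k)$. Then $T$ is a two-level Steiner tree for $P_1,\dots,P_k$ and $$l(T)\le 2\alpha\cdot l(T^{\star}),$$ where $T^{\star}$ is a minimum-length two-level Steiner tree for $P_1,\dots,P_k$.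
   Context: A Steiner tree for a finite set $S\subseteq X$ is a finite tree whose vertex set is a subset of $X$ containing $S$; its length $l(\cdot)$ is the sum of $d(x,y)$ over its edges $\{x,y\}$. A two-level Steiner tree for $P_1,\dots,P_k$ is a tuple $T=(T_{top},T_1,\dots,T_k)$ where each $T_i$ is a Steiner tree for $P_i$ and $T_{top}$ is a Steiner tree such that for every $i$ there is a point $q_i$ that is a vertex of both $T_{top}$ and $T_i$ (so $T_{top}$ is a Steiner tree for $\{q_1,\dots,q_k\}$ and $T_i$ a Steiner tree for $P_i\cup\{q_i\}$). Its length is $l(T)=l(T_{top})+\sum_{i=1}^k l(T_i)$. *)

theory Defs
  imports "HOL-Analysis.Analysis"
begin

text \<open>A finite graph is a pair (V, E) with V a vertex set and E a set of
  undirected edges, each edge being a two-element set of vertices.\<close>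
type_synonym 'a graph = "'a set \<times> 'a set set"

definition verts :: "'a graph \<Rightarrow> 'a set" where "verts T = fst T"
definition edges :: "'a graph \<Rightarrow> 'a set set" where "edges T = snd T"

definition reach :: "'a set set \<Rightarrow> 'a \<Rightarrow> 'a \<Rightarrow> bool" where
  "reach E x y \<longleftrightarrow> (x, y) \<in> {(u, v). {u, v} \<in> E}\<^sup>*"

text \<open>A finite tree: finite nonempty vertex set, edges are two-element subsets
  of the vertex set, connected, and acyclic (no edge lies on a cycle, i.e.
  deleting any edge disconnects its endpoints).\<close>
definition is_tree :: "'a graph \<Rightarrow> bool" where
  "is_tree T \<longleftrightarrow>
     finite (verts T) \<and> verts T \<noteq> {} \<and>
     (\<forall>e\<in>edges T. \<exists>x y. x \<noteq> y \<and> x \<in> verts T \<and> y \<in> verts T \<and> e = {x, y}) \<and>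
     (\<forall>x\<in>verts T. \<forall>y\<in>verts T. reach (edges T) x y) \<and>
     (\<forall>e\<in>edges T. \<forall>x y. e = {x, y} \<longrightarrow> \<not> reach (edges T - {e}) x y)"

definition steiner_tree :: "'a set \<Rightarrow> 'a set \<Rightarrow> 'a graph \<Rightarrow> bool" where
  "steiner_tree M S T \<longleftrightarrow> is_tree T \<and> verts T \<subseteq> M \<and> S \<subseteq> verts T"

text \<open>Length of an edge {x,y} is d x y (well defined since d is symmetric).\<close>
definition edge_len :: "('a \<Rightarrow> 'a \<Rightarrow> real) \<Rightarrow> 'a set \<Rightarrow> real" where
  "edge_len d e = (THE r. \<exists>x y. e = {x, y} \<and> r = d x y)"

definition tree_len :: "('a \<Rightarrow> 'a \<Rightarrow> real) \<Rightarrow> 'a graph \<Rightarrow> real" where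
  "tree_len d T = (\<Sum>e\<in>edges T. edge_len d e)"

definition two_level_steiner_tree ::
  "'a set \<Rightarrow> nat \<Rightarrow> (nat \<Rightarrow> 'a set) \<Rightarrow> 'a graph \<Rightarrow> (nat \<Rightarrow> 'a graph) \<Rightarrow> bool" where
  "two_level_steiner_tree M k Ps Ttop Ts \<longleftrightarrow>
     steiner_tree M {} Ttop \<and>
     (\<forall>i\<in>{1..k}. steiner_tree M (Ps i) (Ts i)) \<and>
     (\<forall>i\<in>{1..k}. \<exists>q. q \<in> verts Ttop \<and> q \<in> verts (Ts i))"

definition two_level_len ::
  "('a \<Rightarrow> 'a \<Rightarrow> real) \<Rightarrow> nat \<Rightarrow> 'a graph \<Rightarrow> (nat \<Rightarrow> 'a graph) \<Rightarrow> real" where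
  "two_level_len d k Ttop Ts = tree_len d Ttop + (\<Sum>i=1..k. tree_len d (Ts i))"

end

theory Submission
  imports Defs
begin

text \<open>Every two-level Steiner tree merges into one Steiner tree for all terminals: the union
  of its trees is connected, since each bottom tree meets the top tree, and a spanning tree of
  this union is no longer than the two-level tree. So the top tree computed by the algorithm
  costs at most \<open>\<alpha>\<close> times an optimal two-level tree, while the bottom trees together cost at
  most \<open>\<alpha>\<close> times the bottom part of the optimum. Adding up gives the factor \<open>2\<alpha>\<close>.\<close>

lemma reach_refl: "reach E x x"
  unfolding reach_def by simp

lemma reach_edge: "{x, y} \<in> E \<Longrightarrow> reach E x y"
  unfolding reach_def by auto

lemma reach_trans: "reach E x y \<Longrightarrow> reach E y z \<Longrightarrow> reach E x z"
  unfolding reach_def by (meson rtrancl_trans)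

lemma reach_sym: "reach E x y \<Longrightarrow> reach E y x"
proof -
  have "sym {(u, v). {u, v} \<in> E}" by (auto simp: sym_def insert_commute)
  then have "sym ({(u, v). {u, v} \<in> E}\<^sup>*)" by (rule sym_rtrancl)
  then show "reach E x y \<Longrightarrow> reach E y x" unfolding reach_def by (meson symD)
qed

lemma reach_mono: "reach E x y \<Longrightarrow> E \<subseteq> F \<Longrightarrow> reach F x y"
  unfolding reach_def by (rule rtrancl_mono[THEN subsetD]) auto

lemma reach_Diff_cycle_edge:
  assumes "reach E a b" and cycle: "reach (E - {{x, y}}) x y"
  shows "reach (E - {{x, y}}) a b"
  using assms(1) unfolding reach_def[of E]
proof (induction rule: rtrancl_induct)
  case base
  then show ?case by (rule reach_refl)
next
  case (step u v)
  have "reach (E - {{x, y}}) u v"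
  proof (cases "{u, v} = {x, y}")
    case True
    then show ?thesis using cycle reach_sym[OF cycle] by (auto simp: doubleton_eq_iff)
  next
    case False
    then show ?thesis using step.hyps(2) by (intro reach_edge) auto
  qed
  then show ?case by (rule reach_trans[OF step.IH])
qed

text \<open>Deleting an edge that lies on a cycle keeps the graph connected and shortens the
  edge set, so it suffices to induct on the number of edges.\<close>

lemma spanning_tree_exists:
  assumes "finite V" "V \<noteq> {}"
    and "\<forall>e\<in>E. \<exists>x y. x \<noteq> y \<and> x \<in> V \<and> y \<in> V \<and> e = {x, y}"
    and "\<forall>x\<in>V. \<forall>y\<in>V. reach E x y"
  shows "\<exists>E'\<subseteq>E. is_tree (V, E')"
  using assms(3,4)
proof (induction "card E" arbitrary: E rule: less_induct)
  case less
  have "E \<subseteq> Pow V" using less.prems(1) by fastforce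
  then have "finite E" using assms(1) by (simp add: finite_subset)
  show ?case
  proof (cases "\<forall>e\<in>E. \<forall>x y. e = {x, y} \<longrightarrow> \<not> reach (E - {e}) x y")
    case True
    then have "is_tree (V, E)"
      using assms(1,2) less.prems unfolding is_tree_def verts_def edges_def fst_conv snd_conv
      by blast
    then show ?thesis by blast
  next
    case False
    then obtain x y where e: "{x, y} \<in> E" "reach (E - {{x, y}}) x y" by blast
    have "card (E - {{x, y}}) < card E" using card_Diff1_less[OF \<open>finite E\<close> e(1)] .
    moreover have "\<forall>e\<in>E - {{x, y}}. \<exists>x y. x \<noteq> y \<and> x \<in> V \<and> y \<in> V \<and> e = {x, y}"
      using less.prems(1) by simp
    moreover have "\<forall>a\<in>V. \<forall>b\<in>V. reach (E - {{x, y}}) a b"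
      using less.prems(2) reach_Diff_cycle_edge[OF _ e(2)] by simp
    ultimately obtain E' where "E' \<subseteq> E - {{x, y}}" "is_tree (V, E')"
      using less.hyps by meson
    then show ?thesis by auto
  qed
qed

lemma is_tree_finite_verts: "is_tree T \<Longrightarrow> finite (verts T)"
  and is_tree_verts_nonempty: "is_tree T \<Longrightarrow> verts T \<noteq> {}"
  and is_tree_edgeD:
    "is_tree T \<Longrightarrow> e \<in> edges T \<Longrightarrow> \<exists>x y. x \<noteq> y \<and> x \<in> verts T \<and> y \<in> verts T \<and> e = {x, y}"
  and is_tree_reach: "is_tree T \<Longrightarrow> x \<in> verts T \<Longrightarrow> y \<in> verts T \<Longrightarrow> reach (edges T) x y"
  unfolding is_tree_def by simp_all

lemma finite_edges_tree: "is_tree T \<Longrightarrow> finite (edges T)"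
proof -
  assume tree: "is_tree T"
  have "edges T \<subseteq> Pow (verts T)"
  proof
    fix e assume "e \<in> edges T"
    then show "e \<in> Pow (verts T)" using is_tree_edgeD[OF tree] by fastforce
  qed
  then show ?thesis by (rule finite_subset) (simp add: is_tree_finite_verts[OF tree])
qed

lemma Union_trees_spanning_tree:
  assumes "finite I" and tree: "\<And>i. i \<in> I \<Longrightarrow> is_tree (T i)"
    and hub: "r \<in> I" "\<And>i. i \<in> I \<Longrightarrow> verts (T i) \<inter> verts (T r) \<noteq> {}"
  shows "\<exists>E\<subseteq>(\<Union>i\<in>I. edges (T i)). is_tree (\<Union>i\<in>I. verts (T i), E)"
proof -
  define V where "V = (\<Union>i\<in>I. verts (T i))"
  define E where "E = (\<Union>i\<in>I. edges (T i))"
  have reach_E: "reach E x y" if "i \<in> I" "x \<in> verts (T i)" "y \<in> verts (T i)" for i x y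
    using is_tree_reach[OF tree[OF that(1)] that(2,3)]
    by (rule reach_mono) (use that(1) in \<open>auto simp: E_def\<close>)
  obtain r0 where r0: "r0 \<in> verts (T r)" using is_tree_verts_nonempty[OF tree[OF hub(1)]] by blast
  have reach_hub: "reach E x r0" if "x \<in> V" for x
  proof -
    obtain i where i: "i \<in> I" "x \<in> verts (T i)" using \<open>x \<in> V\<close> unfolding V_def by blast
    then obtain p where "p \<in> verts (T i)" "p \<in> verts (T r)" using hub(2) by blast
    then show ?thesis using reach_trans[OF reach_E[OF i] reach_E[OF hub(1) _ r0]] by simp
  qed
  have "finite V" using assms(1) is_tree_finite_verts[OF tree] unfolding V_def by simp
  moreover have "V \<noteq> {}" using hub(1) r0 unfolding V_def by blast
  moreover have "\<forall>e\<in>E. \<exists>x y. x \<noteq> y \<and> x \<in> V \<and> y \<in> V \<and> e = {x, y}"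
  proof
    fix e assume "e \<in> E"
    then obtain i where "i \<in> I" "e \<in> edges (T i)" unfolding E_def by blast
    then show "\<exists>x y. x \<noteq> y \<and> x \<in> V \<and> y \<in> V \<and> e = {x, y}"
      using is_tree_edgeD[OF tree] unfolding V_def by blast
  qed
  moreover have "\<forall>x\<in>V. \<forall>y\<in>V. reach E x y"
    using reach_trans[OF reach_hub reach_sym[OF reach_hub]] by simp
  ultimately have "\<exists>E'\<subseteq>E. is_tree (V, E')" by (rule spanning_tree_exists)
  then show ?thesis unfolding V_def E_def .
qed

lemma sum_UN_le:
  fixes f :: "'b \<Rightarrow> 'c::ordered_comm_monoid_add"
  assumes "finite I" "\<forall>i\<in>I. finite (A i)" "\<forall>x\<in>(\<Union>i\<in>I. A i). 0 \<le> f x"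
  shows "sum f (\<Union>i\<in>I. A i) \<le> (\<Sum>i\<in>I. sum f (A i))"
proof -
  have "sum f (\<Union>i\<in>I. A i) = sum f (snd ` Sigma I A)" by (simp only: snd_image_Sigma)
  also have "\<dots> \<le> sum (f \<circ> snd) (Sigma I A)"
    by (rule sum_image_le) (use assms in auto)
  also have "\<dots> = (\<Sum>i\<in>I. sum f (A i))"
    using sum.Sigma[OF assms(1,2), of "\<lambda>_. f"] by (simp add: comp_def case_prod_beta)
  finally show ?thesis .
qed

lemma edge_len_doubleton: "(\<And>x y. d x y = d y x) \<Longrightarrow> edge_len d {x, y} = d x y"
  unfolding edge_len_def by (rule the_equality) (auto simp: doubleton_eq_iff)

lemma steiner_tree_terminals: "steiner_tree M S T \<Longrightarrow> finite S \<and> S \<subseteq> M"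
  unfolding steiner_tree_def by (meson finite_subset is_tree_finite_verts order_trans)

definition steiner_approx :: "'a set \<Rightarrow> ('a \<Rightarrow> 'a \<Rightarrow> real) \<Rightarrow> real \<Rightarrow> ('a set \<Rightarrow> 'a graph) \<Rightarrow> bool"
  where "steiner_approx M d \<alpha> \<A> \<longleftrightarrow>
    (\<forall>S. finite S \<and> S \<subseteq> M \<longrightarrow>
       steiner_tree M S (\<A> S) \<and>
       (\<forall>T'. steiner_tree M S T' \<longrightarrow> tree_len d (\<A> S) \<le> \<alpha> * tree_len d T'))"

lemma steiner_approx_steiner_tree:
  "steiner_approx M d \<alpha> \<A> \<Longrightarrow> finite S \<Longrightarrow> S \<subseteq> M \<Longrightarrow> steiner_tree M S (\<A> S)"
  unfolding steiner_approx_def by blast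

lemma steiner_approx_le:
  "steiner_approx M d \<alpha> \<A> \<Longrightarrow> steiner_tree M S T \<Longrightarrow> tree_len d (\<A> S) \<le> \<alpha> * tree_len d T"
  unfolding steiner_approx_def using steiner_tree_terminals by blast

lemma bottom_up_two_level_steiner_tree:
  assumes "steiner_approx M d \<alpha> \<A>"
    and "\<forall>i\<in>{1..k}. finite (Ps i) \<and> Ps i \<subseteq> M" "\<forall>i\<in>{1..k}. q i \<in> Ps i"
  shows "two_level_steiner_tree M k Ps (\<A> (q ` {1..k})) (\<lambda>i. \<A> (Ps i))"
proof -
  have "q ` {1..k} \<subseteq> M" using assms(2,3) by blast
  then have top: "steiner_tree M (q ` {1..k}) (\<A> (q ` {1..k}))"
    by (simp add: steiner_approx_steiner_tree[OF assms(1)])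
  have bottom: "steiner_tree M (Ps i) (\<A> (Ps i))" if "i \<in> {1..k}" for i
    using assms(2) that by (simp add: steiner_approx_steiner_tree[OF assms(1)])
  have "q i \<in> verts (\<A> (q ` {1..k})) \<and> q i \<in> verts (\<A> (Ps i))" if "i \<in> {1..k}" for i
    using top bottom[OF that] assms(3) that unfolding steiner_tree_def by blast
  then show ?thesis
    using top bottom unfolding two_level_steiner_tree_def steiner_tree_def by blast
qed

context Metric_space
begin

lemma edge_len_nonneg_tree: "is_tree T \<Longrightarrow> e \<in> edges T \<Longrightarrow> 0 \<le> edge_len d e"
  using is_tree_edgeD edge_len_doubleton[of d, OF commute] by (metis nonneg)

lemma tree_len_nonneg: "is_tree T \<Longrightarrow> 0 \<le> tree_len d T"
  unfolding tree_len_def by (rule sum_nonneg) (rule edge_len_nonneg_tree)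

lemma sum_edge_len_le_Union_trees:
  assumes "finite I" "\<forall>i\<in>I. is_tree (T i)" "E \<subseteq> (\<Union>i\<in>I. edges (T i))"
  shows "sum (edge_len d) E \<le> (\<Sum>i\<in>I. tree_len d (T i))"
proof -
  have fin: "\<forall>i\<in>I. finite (edges (T i))" using assms(2) finite_edges_tree by blast
  have nonneg: "\<forall>e\<in>(\<Union>i\<in>I. edges (T i)). 0 \<le> edge_len d e"
    using assms(2) edge_len_nonneg_tree by blast
  have "sum (edge_len d) E \<le> sum (edge_len d) (\<Union>i\<in>I. edges (T i))"
    by (rule sum_mono2) (use assms(1,3) fin nonneg in auto)
  also have "\<dots> \<le> (\<Sum>i\<in>I. tree_len d (T i))"
    unfolding tree_len_def by (rule sum_UN_le) (use assms(1) fin nonneg in auto)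
  finally show ?thesis .
qed

lemma two_level_steiner_tree_merge:
  assumes "two_level_steiner_tree M k Ps Ttop Ts"
  obtains T where "steiner_tree M (\<Union>i\<in>{1..k}. Ps i) T" "tree_len d T \<le> two_level_len d k Ttop Ts"
proof -
  define G where "G i = (if i = 0 then Ttop else Ts i)" for i
  have top: "steiner_tree M {} (G 0)" and bottom: "\<forall>i\<in>{1..k}. steiner_tree M (Ps i) (G i)"
    using assms unfolding two_level_steiner_tree_def G_def by auto
  have index: "{0..k} = insert 0 {1..k}" by auto
  have tree: "\<forall>i\<in>{0..k}. is_tree (G i)"
    using top bottom unfolding index steiner_tree_def by blast
  have "verts (G 0) \<noteq> {}" using top is_tree_verts_nonempty unfolding steiner_tree_def by blast
  moreover have "\<forall>i\<in>{1..k}. verts (G i) \<inter> verts (G 0) \<noteq> {}"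
    using assms unfolding two_level_steiner_tree_def G_def by auto
  ultimately have hub: "\<forall>i\<in>{0..k}. verts (G i) \<inter> verts (G 0) \<noteq> {}"
    unfolding index by simp
  obtain E where E: "E \<subseteq> (\<Union>i\<in>{0..k}. edges (G i))"
    "is_tree (\<Union>i\<in>{0..k}. verts (G i), E)"
    using Union_trees_spanning_tree[of "{0..k}" G 0] tree hub by (simp, blast)
  define T where "T = (\<Union>i\<in>{0..k}. verts (G i), E)"
  have verts_T: "verts T = verts (G 0) \<union> (\<Union>i\<in>{1..k}. verts (G i))"
    unfolding T_def verts_def[of "(_, E)"] index by simp
  have "is_tree T" using E(2) unfolding T_def .
  moreover have "verts T \<subseteq> M"
    using top bottom unfolding verts_T steiner_tree_def by blast
  moreover have "(\<Union>i\<in>{1..k}. Ps i) \<subseteq> verts T"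
    using bottom unfolding verts_T steiner_tree_def by blast
  ultimately have "steiner_tree M (\<Union>i\<in>{1..k}. Ps i) T"
    unfolding steiner_tree_def by blast
  moreover have "tree_len d T \<le> two_level_len d k Ttop Ts"
  proof -
    have "tree_len d T = sum (edge_len d) E"
      unfolding tree_len_def T_def edges_def[of "(_, E)"] by simp
    also have "\<dots> \<le> (\<Sum>i\<in>{0..k}. tree_len d (G i))"
      by (rule sum_edge_len_le_Union_trees) (simp_all add: tree E(1))
    also have "\<dots> = two_level_len d k Ttop Ts"
      by (simp add: sum.atLeast_Suc_atMost G_def two_level_len_def)
    finally show ?thesis .
  qed
  ultimately show ?thesis by (rule that)
qed

lemma steiner_approx_neg_tree_len:
  assumes approx: "steiner_approx M d \<alpha> \<A>" and "\<alpha> < 0" and T: "steiner_tree M S T"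
  shows "tree_len d T = 0"
proof -
  have S: "finite S" "S \<subseteq> M" using steiner_tree_terminals[OF T] by simp_all
  have "0 \<le> tree_len d (\<A> S)"
    using steiner_approx_steiner_tree[OF approx S] tree_len_nonneg unfolding steiner_tree_def by simp
  also have "\<dots> \<le> \<alpha> * tree_len d T" using steiner_approx_le[OF approx T] .
  finally have "tree_len d T \<le> 0" using \<open>\<alpha> < 0\<close> by (simp add: zero_le_mult_iff)
  moreover have "0 \<le> tree_len d T" using T tree_len_nonneg unfolding steiner_tree_def by simp
  ultimately show ?thesis by simp
qed

lemma two_level_len_zero:
  assumes "two_level_steiner_tree M k Ps Ttop Ts" "\<And>S T. steiner_tree M S T \<Longrightarrow> tree_len d T = 0"
  shows "two_level_len d k Ttop Ts = 0"
proof -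
  have "steiner_tree M {} Ttop" "\<forall>i\<in>{1..k}. steiner_tree M (Ps i) (Ts i)"
    using assms(1) unfolding two_level_steiner_tree_def by simp_all
  then have "tree_len d Ttop = 0" "\<forall>i\<in>{1..k}. tree_len d (Ts i) = 0"
    using assms(2) by blast+
  then show ?thesis unfolding two_level_len_def by simp
qed

lemma bottom_up_two_level_len_le:
  assumes approx: "steiner_approx M d \<alpha> \<A>"
    and q: "\<forall>i\<in>{1..k}. q i \<in> Ps i"
    and opt: "two_level_steiner_tree M k Ps Ttop Ts"
  shows "two_level_len d k (\<A> (q ` {1..k})) (\<lambda>i. \<A> (Ps i)) \<le> 2 * \<alpha> * two_level_len d k Ttop Ts"
proof -
  have Ttop: "steiner_tree M {} Ttop" and Ts: "\<forall>i\<in>{1..k}. steiner_tree M (Ps i) (Ts i)"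
    using opt unfolding two_level_steiner_tree_def by simp_all
  have Ps: "\<forall>i\<in>{1..k}. finite (Ps i) \<and> Ps i \<subseteq> M"
    using Ts by (auto dest: steiner_tree_terminals)
  have bottom: "tree_len d (\<A> (Ps i)) \<le> \<alpha> * tree_len d (Ts i)" if "i \<in> {1..k}" for i
    using steiner_approx_le[OF approx] Ts that by simp
  obtain T where T: "steiner_tree M (\<Union>i\<in>{1..k}. Ps i) T"
    and len_T: "tree_len d T \<le> two_level_len d k Ttop Ts"
    using two_level_steiner_tree_merge[OF opt] by blast
  have "steiner_tree M (q ` {1..k}) T" using T q unfolding steiner_tree_def by blast
  then have top: "tree_len d (\<A> (q ` {1..k})) \<le> \<alpha> * tree_len d T"
    by (rule steiner_approx_le[OF approx])
  show ?thesis
  proof (cases "0 \<le> \<alpha>")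
    case True
    have "(\<Sum>i=1..k. tree_len d (\<A> (Ps i))) \<le> (\<Sum>i=1..k. \<alpha> * tree_len d (Ts i))"
      using bottom by (rule sum_mono)
    also have "\<dots> \<le> \<alpha> * two_level_len d k Ttop Ts"
      using True Ttop tree_len_nonneg
      by (simp add: two_level_len_def sum_distrib_left distrib_left steiner_tree_def)
    finally have "(\<Sum>i=1..k. tree_len d (\<A> (Ps i))) \<le> \<alpha> * two_level_len d k Ttop Ts" .
    moreover have "tree_len d (\<A> (q ` {1..k})) \<le> \<alpha> * two_level_len d k Ttop Ts"
      using top mult_left_mono[OF len_T True] by linarith
    ultimately show ?thesis unfolding two_level_len_def by linarith
  next
    case False
    then have "\<And>S T. steiner_tree M S T \<Longrightarrow> tree_len d T = 0"
      using steiner_approx_neg_tree_len[OF approx] by simp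
    then show ?thesis
      using two_level_len_zero bottom_up_two_level_steiner_tree[OF approx Ps q] opt by simp
  qed
qed

end

theorem theorem1:
  fixes M :: "'a set" and d :: "'a \<Rightarrow> 'a \<Rightarrow> real"
    and P :: "'a set" and k :: nat and Ps :: "nat \<Rightarrow> 'a set"
    and \<A> :: "'a set \<Rightarrow> 'a graph" and \<alpha> :: real and q :: "nat \<Rightarrow> 'a"
  assumes "Metric_space M d"
    and "finite P" and "P \<subseteq> M"
    and "(\<Union>i\<in>{1..k}. Ps i) = P"
    and "\<forall>i\<in>{1..k}. Ps i \<noteq> {}"
    and "\<forall>i\<in>{1..k}. \<forall>j\<in>{1..k}. i \<noteq> j \<longrightarrow> Ps i \<inter> Ps j = {}"
    and "\<forall>S. finite S \<and> S \<subseteq> M \<longrightarrow>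
           steiner_tree M S (\<A> S) \<and>
           (\<forall>T'. steiner_tree M S T' \<longrightarrow> tree_len d (\<A> S) \<le> \<alpha> * tree_len d T')"
    and "\<forall>i\<in>{1..k}. q i \<in> Ps i"
  shows "two_level_steiner_tree M k Ps (\<A> (q ` {1..k})) (\<lambda>i. \<A> (Ps i)) \<and>
         (\<forall>Ttop' Ts'. two_level_steiner_tree M k Ps Ttop' Ts' \<longrightarrow>
            two_level_len d k (\<A> (q ` {1..k})) (\<lambda>i. \<A> (Ps i))
              \<le> 2 * \<alpha> * two_level_len d k Ttop' Ts')"
proof -
  have approx: "steiner_approx M d \<alpha> \<A>" using assms(7) unfolding steiner_approx_def .
  have "\<forall>i\<in>{1..k}. finite (Ps i) \<and> Ps i \<subseteq> M"
    using assms(2-4) by (auto intro: finite_subset)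
  then show ?thesis
    using bottom_up_two_level_steiner_tree[OF approx _ assms(8)]
      Metric_space.bottom_up_two_level_len_le[OF assms(1) approx assms(8)]
    by blast
qed

end
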